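(* Let $\Phi=\{\varphi_n\}_{n=1}^N\subseteq\mathbb{R}^M$ with each $\varphi_n$ nonzero, and let $\mathcal{A}\colon\mathbb{R}^M/\{\pm1\}\to\mathbb{R}^N$ be defined by $(\mathcal{A}(x))(n):=|\langle x,\varphi_n\rangle|^2$. Then $\mathcal{A}$ is almost injective if and only if $\Phi$ spans $\mathbb{R}^M$ and $\operatorname{rank}\Phi_S+\operatorname{rank}\Phi_{S^\mathrm{c}}>M$ for each nonempty proper subset $S\subseteq\{1,\ldots,N\}$.
   Context: For $S\subseteq\{1,\ldots,N\}$, $\Phi_S$ denotes the $M\times|S|$ matrix with columns $\{\varphi_n\}_{n\in S}$ and $S^\mathrm{c}$ is the complement of $S$ in $\{1,\ldots,N\}$. The map $\mathcal{A}$ is called almost injective if $\mathcal{A}^{-1}(\mathcal{A}(x))=\{\pm x\}$ for (Lebesgue) almost every $x\in\mathbb{R}^M$. *)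

theory Defs
  imports "HOL-Analysis.Analysis"
begin

definition intensity_map :: "('n \<Rightarrow> real ^ 'm) \<Rightarrow> real ^ 'm \<Rightarrow> ('n \<Rightarrow> real)" where
  "intensity_map \<Phi> x = (\<lambda>n. \<bar>x \<bullet> \<Phi> n\<bar>\<^sup>2)"

definition almost_injective :: "('n \<Rightarrow> real ^ 'm) \<Rightarrow> bool" where
  "almost_injective \<Phi> \<longleftrightarrow>
     (AE x in lebesgue. {y. intensity_map \<Phi> y = intensity_map \<Phi> x} = {x, -x})"

text \<open>rank of the matrix Phi_S with columns phi_n, n in S = dimension of its column space.\<close>
definition rank_sub :: "('n \<Rightarrow> real ^ 'm) \<Rightarrow> 'n set \<Rightarrow> nat" where
  "rank_sub \<Phi> S = dim (span (\<Phi> ` S))"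

end

theory Submission
  imports Defs
begin

text \<open>Write \<open>P S\<close> for the orthogonal complement of \<open>{\<phi>\<^sub>n | n \<in> S}\<close> and \<open>S'\<close> for the
  complement of \<open>S\<close>. Since \<open>|a|\<^sup>2 = |b|\<^sup>2\<close> iff \<open>a = b\<close> or \<open>a = -b\<close>, a vector \<open>x\<close> has a partner
  \<open>y \<noteq> \<plusminus>x\<close> with the same intensities exactly when \<open>x = u + v\<close> with nonzero \<open>u \<in> P S\<close>,
  \<open>v \<in> P S'\<close> for some \<open>S\<close> (namely \<open>u, v = (x \<mp> y)/2\<close>). If \<open>\<Phi>\<close> spans, \<open>P S \<inter> P S' = {0}\<close>,
  so these ambiguous vectors form the union over \<open>S\<close> of \<open>P S + P S'\<close> with both summands
  removed. For proper nonempty \<open>S\<close> the summands are proper subspaces, hence null, so the union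
  is null iff every \<open>P S + P S'\<close>, of dimension \<open>2M - rank \<Phi>\<^sub>S - rank \<Phi>\<^sub>S\<^sub>'\<close>, is a proper
  subspace. If \<open>\<Phi>\<close> does not span, a nonzero \<open>u \<in> P {1..N}\<close> makes every \<open>x \<noteq> u\<close> ambiguous.\<close>

lemma set_plus_eq_setcompr: "S + T = {x + y |x y. x \<in> S \<and> y \<in> T}"
  by (auto simp: set_plus_def)

lemma subspace_set_plus:
  fixes S T :: "'a::euclidean_space set"
  shows "subspace S \<Longrightarrow> subspace T \<Longrightarrow> subspace (S + T)"
  unfolding set_plus_eq_setcompr by (rule subspace_sums)

lemma dim_set_plus_Int:
  fixes S T :: "'a::euclidean_space set"
  shows "subspace S \<Longrightarrow> subspace T \<Longrightarrow> dim (S + T) + dim (S \<inter> T) = dim S + dim T"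
  unfolding set_plus_eq_setcompr by (rule dim_sums_Int)

lemma mem_orthogonal_comp_image: "y \<in> (f ` S)\<^sup>\<bottom> \<longleftrightarrow> (\<forall>n\<in>S. f n \<bullet> y = 0)"
  by (simp add: orthogonal_comp_def orthogonal_def)

lemma orthogonal_comp_empty [simp]: "{}\<^sup>\<bottom> = UNIV"
  by (simp add: orthogonal_comp_def)

lemma orthogonal_comp_Un: "(A \<union> B)\<^sup>\<bottom> = A\<^sup>\<bottom> \<inter> B\<^sup>\<bottom>"
  by (auto simp: orthogonal_comp_def)

lemma orthogonal_comp_span: "(span A)\<^sup>\<bottom> = A\<^sup>\<bottom>"
proof
  show "(span A)\<^sup>\<bottom> \<subseteq> A\<^sup>\<bottom>"
    by (rule orthogonal_comp_anti_mono) (rule span_superset)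
  show "A\<^sup>\<bottom> \<subseteq> (span A)\<^sup>\<bottom>"
    by (auto simp: orthogonal_comp_def orthogonal_commute intro: orthogonal_to_span)
qed

lemma dim_orthogonal_comp:
  fixes A :: "'a::euclidean_space set"
  shows "dim (A\<^sup>\<bottom>) + dim A = DIM('a)"
proof -
  have "dim {y \<in> UNIV. \<forall>x \<in> span A. orthogonal x y} + dim (span A) = dim (UNIV :: 'a set)"
    by (rule dim_subspace_orthogonal_to_vectors) auto
  moreover have "{y \<in> UNIV. \<forall>x \<in> span A. orthogonal x y} = A\<^sup>\<bottom>"
    using orthogonal_comp_span[of A] by (simp add: orthogonal_comp_def)
  ultimately show ?thesis
    by (simp add: dim_span)
qed

lemma orthogonal_comp_eq_0_iff:
  fixes A :: "'a::euclidean_space set"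
  shows "A\<^sup>\<bottom> = {0} \<longleftrightarrow> span A = UNIV"
proof -
  have "A\<^sup>\<bottom> = {0} \<longleftrightarrow> dim (A\<^sup>\<bottom>) = 0"
    using subspace_0[OF subspace_orthogonal_comp, of A] by auto
  also have "\<dots> \<longleftrightarrow> dim A = DIM('a)"
    using dim_orthogonal_comp[of A] by linarith
  also have "\<dots> \<longleftrightarrow> span A = UNIV"
    by (rule dim_eq_full)
  finally show ?thesis .
qed

lemma orthogonal_comp_neq_UNIV:
  assumes "a \<in> A" "a \<noteq> 0"
  shows "A\<^sup>\<bottom> \<noteq> UNIV"
proof
  assume "A\<^sup>\<bottom> = UNIV"
  then have "a \<in> A\<^sup>\<bottom>"
    by simp
  then have "a \<bullet> a = 0"
    using assms(1) by (simp add: orthogonal_comp_def orthogonal_def)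
  then show False
    using assms(2) by simp
qed

lemma negligible_subspace_iff:
  fixes U :: "'a::euclidean_space set"
  assumes "subspace U"
  shows "negligible U \<longleftrightarrow> U \<noteq> UNIV"
proof
  assume "U \<noteq> UNIV"
  then have "dim U \<noteq> DIM('a)"
    using assms dim_eq_full span_eq_iff by metis
  then show "negligible U"
    using dim_subset_UNIV[of U] by (intro negligible_lowdim) simp
qed auto

lemma negligible_Diff_negligible_iff:
  assumes "negligible T"
  shows "negligible (S - T) \<longleftrightarrow> negligible S"
proof
  assume "negligible (S - T)"
  then have "negligible ((S - T) \<union> T)"
    using assms by (rule negligible_Un)
  then show "negligible S"
    by (rule negligible_subset) blast
qed (rule negligible_diff)

lemma negligible_UN_finite_iff:
  fixes D :: "'i::finite \<Rightarrow> 'a::euclidean_space set"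
  shows "negligible (\<Union>i. D i) \<longleftrightarrow> (\<forall>i. negligible (D i))"
proof (intro iffI allI)
  fix i
  assume "negligible (\<Union>i. D i)"
  then show "negligible (D i)"
    by (rule negligible_subset) auto
next
  assume "\<forall>i. negligible (D i)"
  then show "negligible (\<Union>i. D i)"
    by (intro negligible_Union) auto
qed

definition ambiguous :: "('n \<Rightarrow> real ^ 'm) \<Rightarrow> (real ^ 'm) set" where
  "ambiguous \<Phi> = {x. \<exists>y. intensity_map \<Phi> y = intensity_map \<Phi> x \<and> y \<noteq> x \<and> y \<noteq> -x}"

lemma almost_injective_iff_negligible_ambiguous:
  "almost_injective \<Phi> \<longleftrightarrow> negligible (ambiguous \<Phi>)"
proof -
  have "intensity_map \<Phi> (-x) = intensity_map \<Phi> x" for x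
    by (simp add: intensity_map_def)
  then have "{x. {y. intensity_map \<Phi> y = intensity_map \<Phi> x} \<noteq> {x, -x}} = ambiguous \<Phi>"
    by (auto simp: ambiguous_def)
  then have "almost_injective \<Phi> \<longleftrightarrow> (\<exists>N. negligible N \<and> ambiguous \<Phi> \<subseteq> N)"
    unfolding almost_injective_def eventually_ae_filter_negligible by simp
  then show ?thesis
    using negligible_subset by blast
qed

lemma intensity_map_eq_iff:
  "intensity_map \<Phi> y = intensity_map \<Phi> x \<longleftrightarrow> (\<forall>n. (x - y) \<bullet> \<Phi> n = 0 \<or> (x + y) \<bullet> \<Phi> n = 0)"
proof -
  have "\<bar>a\<bar>\<^sup>2 = \<bar>b\<bar>\<^sup>2 \<longleftrightarrow> b - a = 0 \<or> b + a = 0" for a b :: real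
    by (auto simp: power2_eq_iff)
  then show ?thesis
    by (simp add: intensity_map_def fun_eq_iff inner_diff_left inner_add_left)
qed

lemma mem_ambiguous_iff:
  "x \<in> ambiguous \<Phi> \<longleftrightarrow>
    (\<exists>S u v. u \<in> (\<Phi> ` S)\<^sup>\<bottom> \<and> u \<noteq> 0 \<and> v \<in> (\<Phi> ` (- S))\<^sup>\<bottom> \<and> v \<noteq> 0 \<and> x = u + v)"
proof
  assume "x \<in> ambiguous \<Phi>"
  then obtain y where y: "intensity_map \<Phi> y = intensity_map \<Phi> x" "y \<noteq> x" "y \<noteq> -x"
    by (auto simp: ambiguous_def)
  define S where "S = {n. (x - y) \<bullet> \<Phi> n = 0}"
  have "(1/2) *\<^sub>R (x - y) \<in> (\<Phi> ` S)\<^sup>\<bottom>" "(1/2) *\<^sub>R (x + y) \<in> (\<Phi> ` (- S))\<^sup>\<bottom>"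
    using y(1) by (auto simp: mem_orthogonal_comp_image S_def intensity_map_eq_iff inner_commute)
  moreover have "(1/2) *\<^sub>R (x - y) \<noteq> 0" "(1/2) *\<^sub>R (x + y) \<noteq> 0"
    using y(2,3) by (auto simp: add_eq_0_iff)
  moreover have "x = (1/2) *\<^sub>R (x - y) + (1/2) *\<^sub>R (x + y)"
    by (simp add: vec_eq_iff field_simps)
  ultimately show "\<exists>S u v. u \<in> (\<Phi> ` S)\<^sup>\<bottom> \<and> u \<noteq> 0 \<and> v \<in> (\<Phi> ` (- S))\<^sup>\<bottom> \<and> v \<noteq> 0 \<and> x = u + v"
    by blast
next
  assume "\<exists>S u v. u \<in> (\<Phi> ` S)\<^sup>\<bottom> \<and> u \<noteq> 0 \<and> v \<in> (\<Phi> ` (- S))\<^sup>\<bottom> \<and> v \<noteq> 0 \<and> x = u + v"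
  then obtain S u v where uv: "u \<in> (\<Phi> ` S)\<^sup>\<bottom>" "u \<noteq> 0" "v \<in> (\<Phi> ` (- S))\<^sup>\<bottom>" "v \<noteq> 0" "x = u + v"
    by blast
  have diff: "x - (v - u) = 2 *\<^sub>R u" and sum: "x + (v - u) = 2 *\<^sub>R v"
    using uv(5) by (simp_all add: scaleR_2)
  have "intensity_map \<Phi> (v - u) = intensity_map \<Phi> x"
    unfolding intensity_map_eq_iff diff sum
    using uv(1,3) by (auto simp: mem_orthogonal_comp_image inner_commute)
  moreover have "v - u \<noteq> x" "v - u \<noteq> -x"
    using uv(2,4) diff sum by auto
  ultimately show "x \<in> ambiguous \<Phi>"
    by (auto simp: ambiguous_def)
qed

lemma span_eq_UNIV_if_negligible_ambiguous:
  fixes \<Phi> :: "'n \<Rightarrow> real ^ 'm"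
  assumes "negligible (ambiguous \<Phi>)"
  shows "span (range \<Phi>) = UNIV"
proof (rule ccontr)
  assume "span (range \<Phi>) \<noteq> UNIV"
  then have "(range \<Phi>)\<^sup>\<bottom> \<noteq> {0}"
    by (simp add: orthogonal_comp_eq_0_iff)
  moreover have "0 \<in> (range \<Phi>)\<^sup>\<bottom>"
    by (rule subspace_0[OF subspace_orthogonal_comp])
  ultimately obtain u where u: "u \<in> (range \<Phi>)\<^sup>\<bottom>" "u \<noteq> 0"
    by blast
  have "x \<in> ambiguous \<Phi>" if "x \<noteq> u" for x
    unfolding mem_ambiguous_iff
    using u that by (intro exI[of _ UNIV] exI[of _ u] exI[of _ "x - u"]) simp
  then have "UNIV \<subseteq> ambiguous \<Phi> \<union> {u}"
    by blast
  moreover have "negligible (ambiguous \<Phi> \<union> {u})"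
    using assms by simp
  ultimately show False
    using negligible_subset non_negligible_UNIV by metis
qed

lemma orthogonal_comp_image_Int_Compl:
  fixes \<Phi> :: "'n \<Rightarrow> 'a::euclidean_space"
  assumes "span (range \<Phi>) = UNIV"
  shows "(\<Phi> ` S)\<^sup>\<bottom> \<inter> (\<Phi> ` (- S))\<^sup>\<bottom> = {0}"
proof -
  have "(\<Phi> ` S)\<^sup>\<bottom> \<inter> (\<Phi> ` (- S))\<^sup>\<bottom> = (range \<Phi>)\<^sup>\<bottom>"
    by (simp add: orthogonal_comp_Un [symmetric] image_Un [symmetric])
  then show ?thesis
    using assms orthogonal_comp_eq_0_iff by blast
qed

lemma orthogonal_comp_sum_eq_UNIV_iff:
  fixes \<Phi> :: "'n \<Rightarrow> real ^ 'm"
  assumes "span (range \<Phi>) = UNIV"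
  shows "(\<Phi> ` S)\<^sup>\<bottom> + (\<Phi> ` (- S))\<^sup>\<bottom> = UNIV \<longleftrightarrow> rank_sub \<Phi> S + rank_sub \<Phi> (- S) \<le> CARD('m)"
proof -
  let ?U = "(\<Phi> ` S)\<^sup>\<bottom>" and ?V = "(\<Phi> ` (- S))\<^sup>\<bottom>"
  have "dim (?U + ?V) = dim ?U + dim ?V"
    using dim_set_plus_Int[OF subspace_orthogonal_comp subspace_orthogonal_comp, of "\<Phi> ` S" "\<Phi> ` (- S)"]
    by (simp add: orthogonal_comp_image_Int_Compl[OF assms])
  moreover have "dim ?U + rank_sub \<Phi> S = CARD('m)" "dim ?V + rank_sub \<Phi> (- S) = CARD('m)"
    using dim_orthogonal_comp[of "\<Phi> ` S"] dim_orthogonal_comp[of "\<Phi> ` (- S)"]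
    by (simp_all add: rank_sub_def)
  moreover have "?U + ?V = UNIV \<longleftrightarrow> dim (?U + ?V) \<ge> CARD('m)"
  proof -
    have "subspace (?U + ?V)"
      by (intro subspace_set_plus subspace_orthogonal_comp)
    then have "span (?U + ?V) = ?U + ?V"
      by (rule span_eq_iff[THEN iffD2])
    then have "?U + ?V = UNIV \<longleftrightarrow> dim (?U + ?V) = CARD('m)"
      using dim_eq_full[of "?U + ?V"] by (simp only: DIM_cart DIM_real mult_1_right)
    then show ?thesis
      using dim_subset_UNIV_cart[of "?U + ?V"] by linarith
  qed
  ultimately show ?thesis by linarith
qed

lemma ambiguous_eq_Union:
  fixes \<Phi> :: "'n \<Rightarrow> real ^ 'm"
  assumes "span (range \<Phi>) = UNIV"
  shows "ambiguous \<Phi> =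
    (\<Union>S. (\<Phi> ` S)\<^sup>\<bottom> + (\<Phi> ` (- S))\<^sup>\<bottom> - ((\<Phi> ` S)\<^sup>\<bottom> \<union> (\<Phi> ` (- S))\<^sup>\<bottom>))"
proof -
  have only_0: "w = 0" if "w \<in> (\<Phi> ` S)\<^sup>\<bottom>" "w \<in> (\<Phi> ` (- S))\<^sup>\<bottom>" for w S
    using that orthogonal_comp_image_Int_Compl[OF assms, of S] by blast
  show ?thesis
  proof (intro set_eqI iffI)
    fix x assume "x \<in> ambiguous \<Phi>"
    then obtain S u v where uv: "u \<in> (\<Phi> ` S)\<^sup>\<bottom>" "u \<noteq> 0" "v \<in> (\<Phi> ` (- S))\<^sup>\<bottom>" "v \<noteq> 0" "x = u + v"
      unfolding mem_ambiguous_iff by blast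
    \<comment> \<open>if \<open>u + v\<close> lay in one summand, so would the other term, which would then be \<open>0\<close>\<close>
    have "x \<notin> (\<Phi> ` S)\<^sup>\<bottom>" "x \<notin> (\<Phi> ` (- S))\<^sup>\<bottom>"
      using uv only_0[of v S] only_0[of u S] subspace_diff[OF subspace_orthogonal_comp]
      by (metis add_diff_cancel_left' add_diff_cancel_right')+
    then show "x \<in> (\<Union>S. (\<Phi> ` S)\<^sup>\<bottom> + (\<Phi> ` (- S))\<^sup>\<bottom> - ((\<Phi> ` S)\<^sup>\<bottom> \<union> (\<Phi> ` (- S))\<^sup>\<bottom>))"
      using uv by blast
  next
    fix x assume "x \<in> (\<Union>S. (\<Phi> ` S)\<^sup>\<bottom> + (\<Phi> ` (- S))\<^sup>\<bottom> - ((\<Phi> ` S)\<^sup>\<bottom> \<union> (\<Phi> ` (- S))\<^sup>\<bottom>))"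
    then obtain S u v where uv: "u \<in> (\<Phi> ` S)\<^sup>\<bottom>" "v \<in> (\<Phi> ` (- S))\<^sup>\<bottom>" "x = u + v"
      and x: "x \<notin> (\<Phi> ` S)\<^sup>\<bottom>" "x \<notin> (\<Phi> ` (- S))\<^sup>\<bottom>"
      by (auto elim: set_plus_elim)
    have "u \<noteq> 0" "v \<noteq> 0"
      using uv x by auto
    with uv show "x \<in> ambiguous \<Phi>"
      unfolding mem_ambiguous_iff by blast
  qed
qed

lemma negligible_ambiguous_iff:
  fixes \<Phi> :: "'n::finite \<Rightarrow> real ^ 'm"
  assumes span: "span (range \<Phi>) = UNIV" and nonzero: "\<forall>n. \<Phi> n \<noteq> 0"
  shows "negligible (ambiguous \<Phi>) \<longleftrightarrow>
    (\<forall>S. S \<noteq> {} \<and> S \<noteq> UNIV \<longrightarrow> rank_sub \<Phi> S + rank_sub \<Phi> (- S) > CARD('m))"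
proof -
  define D where "D S = (\<Phi> ` S)\<^sup>\<bottom> + (\<Phi> ` (- S))\<^sup>\<bottom> - ((\<Phi> ` S)\<^sup>\<bottom> \<union> (\<Phi> ` (- S))\<^sup>\<bottom>)" for S
  have proper: "negligible (D S) \<longleftrightarrow> rank_sub \<Phi> S + rank_sub \<Phi> (- S) > CARD('m)"
    if "S \<noteq> {}" "S \<noteq> UNIV" for S
  proof -
    from \<open>S \<noteq> {}\<close> obtain n1 where "n1 \<in> S"
      by blast
    from \<open>S \<noteq> UNIV\<close> obtain n2 where "n2 \<in> - S"
      by blast
    have "negligible ((\<Phi> ` S)\<^sup>\<bottom> \<union> (\<Phi> ` (- S))\<^sup>\<bottom>)"
      using orthogonal_comp_neq_UNIV[of "\<Phi> n1" "\<Phi> ` S"] orthogonal_comp_neq_UNIV[of "\<Phi> n2" "\<Phi> ` (- S)"]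
        \<open>n1 \<in> S\<close> \<open>n2 \<in> - S\<close> nonzero
      by (simp add: negligible_subspace_iff subspace_orthogonal_comp)
    then have "negligible (D S) \<longleftrightarrow> negligible ((\<Phi> ` S)\<^sup>\<bottom> + (\<Phi> ` (- S))\<^sup>\<bottom>)"
      unfolding D_def by (rule negligible_Diff_negligible_iff)
    also have "\<dots> \<longleftrightarrow> (\<Phi> ` S)\<^sup>\<bottom> + (\<Phi> ` (- S))\<^sup>\<bottom> \<noteq> UNIV"
      by (intro negligible_subspace_iff subspace_set_plus subspace_orthogonal_comp)
    finally show ?thesis
      using orthogonal_comp_sum_eq_UNIV_iff[OF span, of S] by linarith
  qed
  have "negligible (D S) \<longleftrightarrow> (S \<noteq> {} \<and> S \<noteq> UNIV \<longrightarrow> rank_sub \<Phi> S + rank_sub \<Phi> (- S) > CARD('m))"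
    for S
  proof (cases "S = {} \<or> S = UNIV")
    case True
    then have "D S = {}"
      by (auto simp: D_def)
    then show ?thesis
      using True by auto
  qed (use proper in auto)
  moreover have "negligible (ambiguous \<Phi>) \<longleftrightarrow> (\<forall>S. negligible (D S))"
    unfolding ambiguous_eq_Union[OF span] D_def[symmetric] by (rule negligible_UN_finite_iff)
  ultimately show ?thesis
    by simp
qed

theorem theorem12:
  fixes \<Phi> :: "'n::finite \<Rightarrow> real ^ 'm"
  assumes "\<forall>n. \<Phi> n \<noteq> 0"
  shows "almost_injective \<Phi> \<longleftrightarrow>
    (span (range \<Phi>) = UNIV \<and>
     (\<forall>S. S \<noteq> {} \<and> S \<noteq> UNIV \<longrightarrow> rank_sub \<Phi> S + rank_sub \<Phi> (- S) > CARD('m)))"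
proof (cases "span (range \<Phi>) = UNIV")
  case True
  then show ?thesis
    by (simp add: almost_injective_iff_negligible_ambiguous negligible_ambiguous_iff assms)
next
  case False
  then show ?thesis
    using almost_injective_iff_negligible_ambiguous span_eq_UNIV_if_negligible_ambiguous by blast
qed

end
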